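(* Let $(p_n)$, $(q_n)$ be sequences of positive integers with $\max(p_n,q_n)\to+\infty$. For each $n$ let $(\mathbf{X}_{ni}',\mathbf{Y}_{ni}')'$, $i=1,\ldots,n$, be i.i.d., with $\mathbf{X}_{ni}\in\mathbb{R}^{p_n}$ and $\mathbf{Y}_{ni}\in\mathbb{R}^{q_n}$ independent and having spherical directions. Let $\mathbf{U}_{ni}=\mathbf{X}_{ni}/\|\mathbf{X}_{ni}\|$, $\mathbf{V}_{ni}=\mathbf{Y}_{ni}/\|\mathbf{Y}_{ni}\|$, let $\mathcal{F}_{n\ell}$ be the $\sigma$-algebra generated by $(\mathbf{X}_{n1}',\mathbf{Y}_{n1}')',\ldots,(\mathbf{X}_{n\ell}',\mathbf{Y}_{n\ell}')'$ ($\mathcal{F}_{n0}$ trivial), ${\rm E}_{n\ell}$ the conditional expectation given $\mathcal{F}_{n\ell}$, and $$D^I_{n\ell}=\frac{\sqrt{2p_nq_n}}{n}\sum_{i=1}^{\ell-1}(\mathbf{U}_{ni}'\mathbf{U}_{n\ell})(\mathbf{V}_{ni}'\mathbf{V}_{n\ell}),\qquad \ell=1,\ldots,n$$ (an empty sum being zero). Letting $\sigma^2_{n\ell}={\rm E}_{n,\ell-1}[(D^I_{n\ell})^2]$, the sum $\sum_{\ell=1}^n\sigma^2_{n\ell}$ converges to $1$ in quadratic mean as $n\to\infty$.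
   Context: A distribution on $\mathbb{R}^p$ has spherical directions if it puts no mass at the origin and, for $\mathbf{X}$ with this distribution, $\mathbf{X}/\|\mathbf{X}\|$ is uniformly distributed on the unit sphere $\mathcal{S}^{p-1}$. *)

theory Defs
  imports "HOL-Probability.Probability"
begin

text \<open>Vectors of R^p are represented as extensional functions on the index set {..<p},
  i.e. elements of the space of the product measure of p copies of Lebesgue-Borel measure.\<close>

definition lebesgue_p :: "nat \<Rightarrow> (nat \<Rightarrow> real) measure" where
  "lebesgue_p p = PiM {..<p} (\<lambda>_. lborel)"

definition euc_norm :: "nat \<Rightarrow> (nat \<Rightarrow> real) \<Rightarrow> real" where
  "euc_norm p x = sqrt (\<Sum>j<p. (x j)\<^sup>2)"

definition euc_inner :: "nat \<Rightarrow> (nat \<Rightarrow> real) \<Rightarrow> (nat \<Rightarrow> real) \<Rightarrow> real" where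
  "euc_inner p x y = (\<Sum>j<p. x j * y j)"

definition sphere_dir :: "nat \<Rightarrow> (nat \<Rightarrow> real) \<Rightarrow> (nat \<Rightarrow> real)" where
  "sphere_dir p x = restrict (\<lambda>j. x j / euc_norm p x) {..<p}"

definition unit_ball_p :: "nat \<Rightarrow> (nat \<Rightarrow> real) set" where
  "unit_ball_p p = {x \<in> space (lebesgue_p p). euc_norm p x \<le> 1}"

text \<open>Uniform distribution on the unit sphere S^{p-1}: the normalised surface (cone) measure,
  i.e. the image of the uniform distribution on the unit ball under x \<mapsto> x / norm x.\<close>
definition unif_sphere :: "nat \<Rightarrow> (nat \<Rightarrow> real) measure" where
  "unif_sphere p = distr (uniform_measure (lebesgue_p p) (unit_ball_p p)) (lebesgue_p p) (sphere_dir p)"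

definition spherical_directions :: "'a measure \<Rightarrow> nat \<Rightarrow> ('a \<Rightarrow> (nat \<Rightarrow> real)) \<Rightarrow> bool" where
  "spherical_directions M p X \<longleftrightarrow>
     X \<in> measurable M (lebesgue_p p) \<and>
     emeasure M {\<omega> \<in> space M. euc_norm p (X \<omega>) = 0} = 0 \<and>
     distr M (lebesgue_p p) (\<lambda>\<omega>. sphere_dir p (X \<omega>)) = unif_sphere p"

definition past_algebra :: "'a measure \<Rightarrow> nat \<Rightarrow> nat \<Rightarrow> (nat \<Rightarrow> 'a \<Rightarrow> (nat \<Rightarrow> real))
    \<Rightarrow> (nat \<Rightarrow> 'a \<Rightarrow> (nat \<Rightarrow> real)) \<Rightarrow> nat \<Rightarrow> 'a measure" where
  "past_algebra M p q X Y l = vimage_algebra (space M)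
      (\<lambda>\<omega>. \<lambda>i\<in>{1..l}. (X i \<omega>, Y i \<omega>))
      (PiM {1..l} (\<lambda>_. lebesgue_p p \<Otimes>\<^sub>M lebesgue_p q))"

definition DI :: "nat \<Rightarrow> nat \<Rightarrow> nat \<Rightarrow> (nat \<Rightarrow> 'a \<Rightarrow> (nat \<Rightarrow> real))
    \<Rightarrow> (nat \<Rightarrow> 'a \<Rightarrow> (nat \<Rightarrow> real)) \<Rightarrow> nat \<Rightarrow> 'a \<Rightarrow> real" where
  "DI n p q X Y l \<omega> = sqrt (2 * real p * real q) / real n *
     (\<Sum>i\<in>{1..<l}. euc_inner p (sphere_dir p (X i \<omega>)) (sphere_dir p (X l \<omega>))
                  * euc_inner q (sphere_dir q (Y i \<omega>)) (sphere_dir q (Y l \<omega>)))"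

end

theory Submission
  imports Defs
begin

text \<open>
  Write k(z, w) = (U_z' U_w) (V_z' V_w) for the product of the inner products of the directions
  of two observations. Coordinate reflections and transpositions preserve the uniform distribution
  on the sphere, so a spherical direction U has E U = 0 and E U U' = I / p; as X and Y are
  independent, E k(z, W) = 0 and E k(z, W) k(z', W) = k(z, z') / (p q). Integrating out the l-th
  observation, which is independent of the past, gives \<sigma>^2_l = 2 / n^2 \<Sum>_{i,j<l} k(W_i, W_j).
  Since k(W_i, W_i) = 1 almost surely, \<Sum>_l \<sigma>^2_l - 1 = - 1 / n + 4 / n^2 T with
  T = \<Sum>_j (n - j) R_j and R_j = \<Sum>_{i<j} k(W_i, W_j). The R_j are orthogonal with
  E R_j^2 = (j - 1) / (p q), so E T^2 \<le> n^4 / (p q) and the mean square error is at most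
  2 / n^2 + 32 / (p q), which tends to 0 because p q \<ge> max p q.
\<close>

lemma measurable_component_lebesgue_p [measurable]:
  "j < p \<Longrightarrow> (\<lambda>x. x j) \<in> borel_measurable (lebesgue_p p)"
  using measurable_component_singleton[of j "{..<p}" "\<lambda>_. lborel"] by (simp add: lebesgue_p_def)

lemma euc_norm_measurable [measurable]: "euc_norm p \<in> borel_measurable (lebesgue_p p)"
  unfolding euc_norm_def[abs_def] by measurable

lemma sphere_dir_component_measurable [measurable]:
  "(\<lambda>x. sphere_dir p x j) \<in> borel_measurable (lebesgue_p p)"
  unfolding sphere_dir_def by (cases "j < p") (auto intro!: borel_measurable_divide)

lemma measurable_into_lebesgue_p:
  assumes "\<And>j. j < p \<Longrightarrow> (\<lambda>x. f x j) \<in> borel_measurable M" and "\<And>x. f x \<in> extensional {..<p}"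
  shows "f \<in> measurable M (lebesgue_p p)"
proof -
  have "(\<lambda>x. \<lambda>j\<in>{..<p}. f x j) \<in> measurable M (lebesgue_p p)"
    unfolding lebesgue_p_def by (rule measurable_restrict) (use assms in simp)
  moreover have "(\<lambda>x. \<lambda>j\<in>{..<p}. f x j) = f"
    using assms(2) by (auto simp: fun_eq_iff extensional_def)
  ultimately show ?thesis by simp
qed

lemma sphere_dir_measurable [measurable]: "sphere_dir p \<in> measurable (lebesgue_p p) (lebesgue_p p)"
  by (rule measurable_into_lebesgue_p) (auto simp: sphere_dir_def)

lemma abs_sphere_dir_le_1:
  assumes "j < p" shows "\<bar>sphere_dir p x j\<bar> \<le> 1"
proof (cases "euc_norm p x \<noteq> 0")
  case True
  have "(x j)\<^sup>2 \<le> (\<Sum>i<p. (x i)\<^sup>2)"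
    using assms by (intro member_le_sum) auto
  then have "\<bar>x j\<bar> \<le> euc_norm p x"
    unfolding euc_norm_def by (metis real_sqrt_abs real_sqrt_le_mono)
  then show ?thesis using True assms by (auto simp: sphere_dir_def abs_divide divide_le_eq_1)
qed (use assms in \<open>auto simp: sphere_dir_def\<close>)

lemma sum_sphere_dir_squared: "euc_norm p x \<noteq> 0 \<Longrightarrow> (\<Sum>j<p. (sphere_dir p x j)\<^sup>2) = 1"
  by (simp add: sphere_dir_def power_divide euc_norm_def sum_divide_distrib[symmetric] sum_nonneg)

lemma abs_euc_inner_sphere_dir_le: "\<bar>euc_inner p (sphere_dir p x) (sphere_dir p y)\<bar> \<le> real p"
proof -
  have "\<bar>euc_inner p (sphere_dir p x) (sphere_dir p y)\<bar> \<le> (\<Sum>j<p. \<bar>sphere_dir p x j * sphere_dir p y j\<bar>)"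
    unfolding euc_inner_def by (rule sum_abs)
  also have "\<dots> \<le> (\<Sum>j<p. 1)"
    by (intro sum_mono) (auto simp: abs_mult intro!: mult_le_one abs_sphere_dir_le_1)
  finally show ?thesis by simp
qed

section \<open>Symmetries of the uniform distribution on the sphere\<close>

lemma distr_unif_sphere_invariant:
  fixes T :: "(nat \<Rightarrow> real) \<Rightarrow> nat \<Rightarrow> real"
  assumes T [measurable]: "T \<in> measurable (lebesgue_p p) (lebesgue_p p)"
    and distr_T: "distr (lebesgue_p p) (lebesgue_p p) T = lebesgue_p p"
    and norm_T: "\<And>x. euc_norm p (T x) = euc_norm p x"
    and dir_T: "\<And>x. sphere_dir p (T x) = T (sphere_dir p x)"
  shows "distr (unif_sphere p) (lebesgue_p p) T = unif_sphere p"
proof -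
  define L where "L = lebesgue_p p"
  define B where "B = unit_ball_p p"
  define U where "U = uniform_measure L B"
  have B: "B \<in> sets L"
    unfolding B_def L_def unit_ball_p_def by measurable
  have T_U: "T \<in> measurable U L" and dir_U: "sphere_dir p \<in> measurable U L"
    unfolding U_def L_def measurable_cong_sets[OF sets_uniform_measure refl] by simp_all
  have distr_U: "distr U L T = U"
  proof (rule measure_eqI)
    fix A assume "A \<in> sets (distr U L T)"
    then have A: "A \<in> sets L" by simp
    have ball_preimage: "B \<inter> (T -` A \<inter> space L) = T -` (B \<inter> A) \<inter> space L"
      using norm_T measurable_space[OF T] unfolding B_def unit_ball_p_def L_def by auto
    have "emeasure (distr U L T) A = emeasure U (T -` A \<inter> space U)"
      by (rule emeasure_distr[OF T_U A])
    also have "\<dots> = emeasure L (B \<inter> (T -` A \<inter> space L)) / emeasure L B"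
      using B A T by (simp add: U_def L_def)
    also have "emeasure L (B \<inter> (T -` A \<inter> space L)) = emeasure (distr L L T) (B \<inter> A)"
      unfolding ball_preimage using A B by (intro emeasure_distr[symmetric]) (auto simp: L_def)
    finally show "emeasure (distr U L T) A = emeasure U A"
      using distr_T A B by (simp add: L_def U_def)
  qed (simp add: U_def)
  have "distr (unif_sphere p) L T = distr U L (\<lambda>x. T (sphere_dir p x))"
    unfolding unif_sphere_def U_def[symmetric] L_def[symmetric] B_def[symmetric]
    by (subst distr_distr) (auto simp: comp_def T_U dir_U T[folded L_def])
  also have "\<dots> = distr (distr U L T) L (sphere_dir p)"
    using T_U by (subst distr_distr) (auto simp: comp_def L_def dir_T)
  finally show ?thesis
    using distr_U unfolding unif_sphere_def U_def L_def B_def by simp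
qed

lemma measurable_unif_sphere_iff [simp]: "measurable (unif_sphere p) N = measurable (lebesgue_p p) N"
  by (rule measurable_cong_sets) (simp_all add: unif_sphere_def)

lemma
  fixes c :: real
  assumes c: "\<bar>c\<bar> = 1" and A: "A \<in> sets borel"
  shows sets_vimage_sign: "(*) c -` A \<in> sets borel"
    and emeasure_lborel_vimage_sign: "emeasure lborel ((*) c -` A) = emeasure lborel A"
proof -
  have [measurable]: "(*) c \<in> borel_measurable borel" by simp
  show "(*) c -` A \<in> sets borel"
    using measurable_sets[of "(*) c" borel borel A] A by simp
  have "distr lborel borel ((*) c) = lborel"
    using c by (simp add: lborel_distr_mult density_1)
  then show "emeasure lborel ((*) c -` A) = emeasure lborel A"
    using emeasure_distr[of "(*) c" lborel borel A] A by simp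
qed

definition signed_perm :: "nat \<Rightarrow> (nat \<Rightarrow> real) \<Rightarrow> (nat \<Rightarrow> nat) \<Rightarrow> (nat \<Rightarrow> real) \<Rightarrow> nat \<Rightarrow> real"
  where "signed_perm p s \<pi> x = (\<lambda>j\<in>{..<p}. s j * x (\<pi> j))"

locale signed_permutation =
  fixes p :: nat and s :: "nat \<Rightarrow> real" and \<pi> :: "nat \<Rightarrow> nat"
  assumes permutes: "\<pi> permutes {..<p}" and sign: "\<And>j. j < p \<Longrightarrow> \<bar>s j\<bar> = 1"
begin

lemma perm_less: "j < p \<Longrightarrow> \<pi> j < p"
  using permutes_in_image[OF permutes] by simp

lemma measurable [measurable]: "signed_perm p s \<pi> \<in> measurable (lebesgue_p p) (lebesgue_p p)"
  by (rule measurable_into_lebesgue_p) (auto simp: signed_perm_def perm_less)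

lemma euc_norm_eq: "euc_norm p (signed_perm p s \<pi> x) = euc_norm p x"
proof -
  have "(\<Sum>j<p. (s j * x (\<pi> j))\<^sup>2) = (\<Sum>j<p. (x (\<pi> j))\<^sup>2)"
    using sign by (intro sum.cong) (auto simp: power_mult_distrib abs_square_eq_1)
  also have "\<dots> = (\<Sum>j<p. (x j)\<^sup>2)"
    using sum.permute[OF permutes, of "\<lambda>j. (x j)\<^sup>2"] by (simp add: comp_def)
  finally show ?thesis by (simp add: euc_norm_def signed_perm_def)
qed

lemma sphere_dir_eq: "sphere_dir p (signed_perm p s \<pi> x) = signed_perm p s \<pi> (sphere_dir p x)"
  using euc_norm_eq[of x, unfolded signed_perm_def]
  by (auto simp: sphere_dir_def signed_perm_def perm_less fun_eq_iff)

lemma vimage_PiE: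
  "signed_perm p s \<pi> -` PiE {..<p} A \<inter> space (PiM {..<p} (\<lambda>_. lborel))
    = PiE {..<p} (\<lambda>k. (*) (s (inv \<pi> k)) -` A (inv \<pi> k))"
proof -
  have inv_less: "k < p \<Longrightarrow> inv \<pi> k < p" for k
    using permutes_in_image[OF permutes_inv[OF permutes]] by simp
  have "(\<forall>j\<in>{..<p}. s j * x (\<pi> j) \<in> A j) \<longleftrightarrow> (\<forall>k\<in>{..<p}. s (inv \<pi> k) * x k \<in> A (inv \<pi> k))" for x
    using inv_less perm_less permutes_inverses[OF permutes] by (metis lessThan_iff)
  then show ?thesis
    by (auto simp: signed_perm_def space_PiM restrict_PiE_iff PiE_iff)
qed

lemma distr_lebesgue_p: "distr (lebesgue_p p) (lebesgue_p p) (signed_perm p s \<pi>) = lebesgue_p p"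
proof -
  interpret product_sigma_finite "\<lambda>_::nat. lborel :: real measure" ..
  have inv_permutes: "inv \<pi> permutes {..<p}"
    by (rule permutes_inv[OF permutes])
  have inv_less: "k < p \<Longrightarrow> inv \<pi> k < p" for k
    using permutes_in_image[OF inv_permutes] by simp
  show ?thesis
    unfolding lebesgue_p_def
  proof (rule PiM_eqI)
    fix A :: "nat \<Rightarrow> real set" assume A: "\<And>i. i \<in> {..<p} \<Longrightarrow> A i \<in> sets lborel"
    have "emeasure (distr (PiM {..<p} (\<lambda>_. lborel)) (PiM {..<p} (\<lambda>_. lborel)) (signed_perm p s \<pi>)) (PiE {..<p} A)
        = emeasure (PiM {..<p} (\<lambda>_. lborel)) (PiE {..<p} (\<lambda>k. (*) (s (inv \<pi> k)) -` A (inv \<pi> k)))"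
      using measurable A unfolding lebesgue_p_def vimage_PiE[symmetric]
      by (intro emeasure_distr sets_PiM_I_finite) auto
    also have "\<dots> = (\<Prod>k<p. emeasure lborel (A (inv \<pi> k)))"
      using A sign inv_less by (subst emeasure_PiM) (auto simp: emeasure_lborel_vimage_sign intro!: sets_vimage_sign)
    also have "\<dots> = (\<Prod>j<p. emeasure lborel (A j))"
      using prod.permute[OF inv_permutes, of "\<lambda>j. emeasure lborel (A j)"] by (simp add: comp_def)
    finally show "emeasure (distr (PiM {..<p} (\<lambda>_. lborel)) (PiM {..<p} (\<lambda>_. lborel)) (signed_perm p s \<pi>))
        (PiE {..<p} A) = (\<Prod>j\<in>{..<p}. emeasure lborel (A j))" by simp
  qed auto
qed

lemma distr_unif_sphere: "distr (unif_sphere p) (lebesgue_p p) (signed_perm p s \<pi>) = unif_sphere p"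
  by (rule distr_unif_sphere_invariant[OF measurable distr_lebesgue_p euc_norm_eq sphere_dir_eq])

end

section \<open>Moments of spherical directions\<close>

lemma AE_spherical_directions_nonzero:
  assumes "spherical_directions M p X"
  shows "AE \<omega> in M. euc_norm p (X \<omega>) \<noteq> 0"
proof -
  have [measurable]: "X \<in> measurable M (lebesgue_p p)"
    using assms by (simp add: spherical_directions_def)
  have "{\<omega> \<in> space M. euc_norm p (X \<omega>) = 0} \<in> sets M" by measurable
  then show ?thesis
    using assms by (subst AE_iff_measurable) (auto simp: spherical_directions_def)
qed

lemma integral_spherical_directions_signed_perm:
  fixes g :: "(nat \<Rightarrow> real) \<Rightarrow> real"
  assumes X: "spherical_directions M p X" and T: "signed_permutation p s \<pi>"
    and g [measurable]: "g \<in> borel_measurable (lebesgue_p p)"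
  shows "(\<integral>\<omega>. g (sphere_dir p (X \<omega>)) \<partial>M) = (\<integral>\<omega>. g (signed_perm p s \<pi> (sphere_dir p (X \<omega>))) \<partial>M)"
proof -
  have [measurable]: "X \<in> measurable M (lebesgue_p p)"
    and distr_X: "distr M (lebesgue_p p) (\<lambda>\<omega>. sphere_dir p (X \<omega>)) = unif_sphere p"
    using X by (auto simp: spherical_directions_def)
  note T_meas [measurable] = signed_permutation.measurable[OF T]
  have "(\<integral>\<omega>. g (sphere_dir p (X \<omega>)) \<partial>M) = integral\<^sup>L (unif_sphere p) g"
    by (subst distr_X[symmetric], subst integral_distr) auto
  also have "\<dots> = integral\<^sup>L (distr (unif_sphere p) (lebesgue_p p) (signed_perm p s \<pi>)) g"
    by (simp add: signed_permutation.distr_unif_sphere[OF T])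
  also have "\<dots> = integral\<^sup>L (unif_sphere p) (\<lambda>x. g (signed_perm p s \<pi> x))"
    by (rule integral_distr) simp_all
  also have "\<dots> = (\<integral>\<omega>. g (signed_perm p s \<pi> (sphere_dir p (X \<omega>))) \<partial>M)"
    by (subst distr_X[symmetric], subst integral_distr) auto
  finally show ?thesis .
qed

lemma signed_permutation_reflection:
  "signed_permutation p (\<lambda>j. if j = a then -1 else 1) id"
  by unfold_locales (auto intro: permutes_id)

lemma signed_permutation_transposition:
  "a < p \<Longrightarrow> b < p \<Longrightarrow> signed_permutation p (\<lambda>_. 1) (Transposition.transpose a b)"
  by unfold_locales (auto intro: permutes_swap_id)

context prob_space
begin

lemma integrable_bounded:
  fixes f :: "'a \<Rightarrow> real"
  assumes "f \<in> borel_measurable M" and "\<And>\<omega>. \<omega> \<in> space M \<Longrightarrow> \<bar>f \<omega>\<bar> \<le> C"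
  shows "integrable M f"
  using assms by (intro integrable_const_bound[where B=C] AE_I2) auto

lemma integral_sum_bounded:
  fixes f :: "'i \<Rightarrow> 'a \<Rightarrow> real"
  assumes "finite J" and "\<And>j. j \<in> J \<Longrightarrow> f j \<in> borel_measurable M"
    and "\<And>j \<omega>. j \<in> J \<Longrightarrow> \<omega> \<in> space M \<Longrightarrow> \<bar>f j \<omega>\<bar> \<le> C"
  shows "(\<integral>\<omega>. (\<Sum>j\<in>J. f j \<omega>) \<partial>M) = (\<Sum>j\<in>J. (\<integral>\<omega>. f j \<omega> \<partial>M))"
  using assms by (intro Bochner_Integration.integral_sum integrable_bounded) auto

lemma integral_sphere_dir_component:
  assumes X: "spherical_directions M p X" and a: "a < p"
  shows "(\<integral>\<omega>. sphere_dir p (X \<omega>) a \<partial>M) = 0"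
proof -
  have "(\<integral>\<omega>. sphere_dir p (X \<omega>) a \<partial>M)
      = (\<integral>\<omega>. signed_perm p (\<lambda>j. if j = a then -1 else 1) id (sphere_dir p (X \<omega>)) a \<partial>M)"
    using a by (intro integral_spherical_directions_signed_perm[OF X signed_permutation_reflection]) auto
  also have "\<dots> = - (\<integral>\<omega>. sphere_dir p (X \<omega>) a \<partial>M)"
    using a by (simp add: signed_perm_def)
  finally show ?thesis by simp
qed

lemma integral_sphere_dir_squared:
  assumes X: "spherical_directions M p X" and a: "a < p"
  shows "(\<integral>\<omega>. (sphere_dir p (X \<omega>) a)\<^sup>2 \<partial>M) = 1 / real p"
proof -
  have [measurable]: "X \<in> measurable M (lebesgue_p p)"
    using X by (simp add: spherical_directions_def)
  have p: "0 < p" using a by simp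
  have same: "(\<integral>\<omega>. (sphere_dir p (X \<omega>) j)\<^sup>2 \<partial>M) = (\<integral>\<omega>. (sphere_dir p (X \<omega>) 0)\<^sup>2 \<partial>M)"
    if j: "j < p" for j
  proof -
    have "(\<integral>\<omega>. (sphere_dir p (X \<omega>) j)\<^sup>2 \<partial>M)
        = (\<integral>\<omega>. (signed_perm p (\<lambda>_. 1) (Transposition.transpose j 0) (sphere_dir p (X \<omega>)) j)\<^sup>2 \<partial>M)"
      using j p by (intro integral_spherical_directions_signed_perm[OF X signed_permutation_transposition]) auto
    then show ?thesis
      using j p by (simp add: signed_perm_def)
  qed
  have "real p * (\<integral>\<omega>. (sphere_dir p (X \<omega>) 0)\<^sup>2 \<partial>M) = (\<Sum>j<p. (\<integral>\<omega>. (sphere_dir p (X \<omega>) j)\<^sup>2 \<partial>M))"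
    using sum.cong[OF refl same, of "{..<p}"] by simp
  also have "\<dots> = (\<integral>\<omega>. (\<Sum>j<p. (sphere_dir p (X \<omega>) j)\<^sup>2) \<partial>M)"
    by (intro Bochner_Integration.integral_sum[symmetric] integrable_bounded[where C=1])
      (auto simp: abs_square_le_1 abs_sphere_dir_le_1)
  also have "\<dots> = (\<integral>\<omega>. 1 \<partial>M)"
    using AE_spherical_directions_nonzero[OF X]
    by (intro integral_cong_AE) (auto simp: sum_sphere_dir_squared)
  finally show ?thesis
    using same[OF a] p by (simp add: prob_space field_simps)
qed

lemma integral_sphere_dir_mult:
  assumes X: "spherical_directions M p X" and ab: "a < p" "b < p"
  shows "(\<integral>\<omega>. sphere_dir p (X \<omega>) a * sphere_dir p (X \<omega>) b \<partial>M) = (if a = b then 1 / real p else 0)"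
proof (cases "a = b")
  case False
  have "(\<integral>\<omega>. sphere_dir p (X \<omega>) a * sphere_dir p (X \<omega>) b \<partial>M)
      = (\<integral>\<omega>. signed_perm p (\<lambda>j. if j = a then -1 else 1) id (sphere_dir p (X \<omega>)) a
             * signed_perm p (\<lambda>j. if j = a then -1 else 1) id (sphere_dir p (X \<omega>)) b \<partial>M)"
    using ab by (intro integral_spherical_directions_signed_perm[OF X signed_permutation_reflection]) auto
  also have "\<dots> = - (\<integral>\<omega>. sphere_dir p (X \<omega>) a * sphere_dir p (X \<omega>) b \<partial>M)"
    using ab False by (simp add: signed_perm_def)
  finally show ?thesis using False by simp
qed (use integral_sphere_dir_squared[OF X ab(1)] in \<open>simp add: power2_eq_square\<close>)

lemma integral_euc_inner_sphere_dir:
  assumes X: "spherical_directions M p X"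
  shows "(\<integral>\<omega>. euc_inner p a (sphere_dir p (X \<omega>)) \<partial>M) = 0"
proof -
  have [measurable]: "X \<in> measurable M (lebesgue_p p)"
    using X by (simp add: spherical_directions_def)
  have "(\<integral>\<omega>. euc_inner p a (sphere_dir p (X \<omega>)) \<partial>M) = (\<Sum>j<p. a j * (\<integral>\<omega>. sphere_dir p (X \<omega>) j \<partial>M))"
  proof -
    have "\<bar>a j * sphere_dir p (X \<omega>) j\<bar> \<le> (\<Sum>i<p. \<bar>a i\<bar>)" if "j < p" for j \<omega>
    proof -
      have "\<bar>a j * sphere_dir p (X \<omega>) j\<bar> \<le> \<bar>a j\<bar>"
        using abs_sphere_dir_le_1[OF that] by (simp add: abs_mult mult_left_le)
      also have "\<dots> \<le> (\<Sum>i<p. \<bar>a i\<bar>)"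
        using that by (intro member_le_sum) auto
      finally show ?thesis .
    qed
    then show ?thesis
      unfolding euc_inner_def by (subst integral_sum_bounded[where C="\<Sum>i<p. \<bar>a i\<bar>"]) auto
  qed
  then show ?thesis
    by (simp add: integral_sphere_dir_component[OF X])
qed

lemma integral_euc_inner_sphere_dir_mult:
  assumes X: "spherical_directions M p X"
  shows "(\<integral>\<omega>. euc_inner p a (sphere_dir p (X \<omega>)) * euc_inner p b (sphere_dir p (X \<omega>)) \<partial>M)
    = euc_inner p a b / real p"
proof -
  have [measurable]: "X \<in> measurable M (lebesgue_p p)"
    using X by (simp add: spherical_directions_def)
  have expand: "euc_inner p a (sphere_dir p (X \<omega>)) * euc_inner p b (sphere_dir p (X \<omega>)) =
     (\<Sum>j<p. \<Sum>k<p. (a j * b k) * (sphere_dir p (X \<omega>) j * sphere_dir p (X \<omega>) k))" for \<omega>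
    unfolding euc_inner_def sum_product by (intro sum.cong refl) (simp add: algebra_simps)
  have integrable: "integrable M (\<lambda>\<omega>. (a j * b k) * (sphere_dir p (X \<omega>) j * sphere_dir p (X \<omega>) k))"
    if "j < p" "k < p" for j k
    using that by (intro integrable_bounded[where C="\<bar>a j * b k\<bar>"])
      (auto simp: abs_mult intro!: mult_left_le mult_le_one abs_sphere_dir_le_1)
  have "(\<integral>\<omega>. euc_inner p a (sphere_dir p (X \<omega>)) * euc_inner p b (sphere_dir p (X \<omega>)) \<partial>M) =
     (\<Sum>j<p. \<Sum>k<p. (a j * b k) * (\<integral>\<omega>. sphere_dir p (X \<omega>) j * sphere_dir p (X \<omega>) k \<partial>M))"
  proof -
    have "(\<integral>\<omega>. (\<Sum>j<p. \<Sum>k<p. (a j * b k) * (sphere_dir p (X \<omega>) j * sphere_dir p (X \<omega>) k)) \<partial>M)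
        = (\<Sum>j<p. \<integral>\<omega>. (\<Sum>k<p. (a j * b k) * (sphere_dir p (X \<omega>) j * sphere_dir p (X \<omega>) k)) \<partial>M)"
      using integrable by (intro Bochner_Integration.integral_sum Bochner_Integration.integrable_sum) auto
    also have "\<dots> = (\<Sum>j<p. \<Sum>k<p. \<integral>\<omega>. (a j * b k) * (sphere_dir p (X \<omega>) j * sphere_dir p (X \<omega>) k) \<partial>M)"
      using integrable by (intro sum.cong refl Bochner_Integration.integral_sum) auto
    finally show ?thesis
      unfolding expand by simp
  qed
  also have "\<dots> = (\<Sum>j<p. a j * b j / real p)"
    by (simp add: integral_sphere_dir_mult[OF X] if_distrib[of "(*) _"] sum.delta cong: if_cong)
  finally show ?thesis
    by (simp add: euc_inner_def sum_divide_distrib)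
qed

section \<open>Independence and conditional expectation\<close>

lemma integral_indep_var_eq_iterated:
  fixes F :: "'b \<times> 'b \<Rightarrow> real"
  assumes indep: "indep_var N1 G N2 Z"
    and F [measurable]: "F \<in> borel_measurable (N1 \<Otimes>\<^sub>M N2)"
    and bounded: "\<And>x. x \<in> space (N1 \<Otimes>\<^sub>M N2) \<Longrightarrow> \<bar>F x\<bar> \<le> C"
  shows "(\<integral>\<omega>. F (G \<omega>, Z \<omega>) \<partial>M) = (\<integral>\<omega>. (\<integral>\<omega>'. F (G \<omega>, Z \<omega>') \<partial>M) \<partial>M)"
proof -
  have G [measurable]: "G \<in> measurable M N1" and Z [measurable]: "Z \<in> measurable M N2"
    using indep_var_rv1[OF indep] indep_var_rv2[OF indep] by auto
  interpret P1: prob_space "distr M N1 G" by (rule prob_space_distr) simp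
  interpret P2: prob_space "distr M N2 Z" by (rule prob_space_distr) simp
  interpret P12: pair_prob_space "distr M N1 G" "distr M N2 Z" ..
  have joint: "distr M N1 G \<Otimes>\<^sub>M distr M N2 Z = distr M (N1 \<Otimes>\<^sub>M N2) (\<lambda>\<omega>. (G \<omega>, Z \<omega>))"
    using indep by (simp add: indep_var_distribution_eq)
  have "integrable M (\<lambda>\<omega>. F (G \<omega>, Z \<omega>))"
    by (rule integrable_bounded[where C=C]) (auto intro!: bounded simp: space_pair_measure
        measurable_space[OF G] measurable_space[OF Z])
  then have integrable: "integrable (distr M N1 G \<Otimes>\<^sub>M distr M N2 Z) F"
    unfolding joint by (subst integrable_distr_eq) auto
  have "(\<integral>\<omega>. F (G \<omega>, Z \<omega>) \<partial>M) = integral\<^sup>L (distr M N1 G \<Otimes>\<^sub>M distr M N2 Z) F"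
    unfolding joint by (rule integral_distr[symmetric]) auto
  also have "\<dots> = (\<integral>x. (\<integral>y. F (x, y) \<partial>distr M N2 Z) \<partial>distr M N1 G)"
    by (rule P12.integral_fst'[OF integrable, symmetric])
  also have "\<dots> = (\<integral>x. (\<integral>\<omega>'. F (x, Z \<omega>') \<partial>M) \<partial>distr M N1 G)"
    by (intro Bochner_Integration.integral_cong refl integral_distr) (auto intro: measurable_Pair2[OF F])
  finally show ?thesis
    by (simp add: integral_distr)
qed

lemma integral_indep_vars_eq_iterated:
  fixes F :: "(nat \<Rightarrow> 'b) \<times> 'b \<Rightarrow> real"
  assumes indep: "indep_vars (\<lambda>_. N) W I"
    and t: "t \<in> I" and S: "S \<subseteq> I" "t \<notin> S"
    and F [measurable]: "F \<in> borel_measurable (PiM S (\<lambda>_. N) \<Otimes>\<^sub>M N)"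
    and bounded: "\<And>x. x \<in> space (PiM S (\<lambda>_. N) \<Otimes>\<^sub>M N) \<Longrightarrow> \<bar>F x\<bar> \<le> C"
  shows "(\<integral>\<omega>. F (restrict (\<lambda>i. W i \<omega>) S, W t \<omega>) \<partial>M) =
         (\<integral>\<omega>. (\<integral>\<omega>'. F (restrict (\<lambda>i. W i \<omega>) S, W t \<omega>') \<partial>M) \<partial>M)"
proof -
  have indep': "indep_var (PiM S (\<lambda>_. N)) (\<lambda>\<omega>. restrict (\<lambda>i. W i \<omega>) S)
      (PiM {t} (\<lambda>_. N)) (\<lambda>\<omega>. restrict (\<lambda>i. W i \<omega>) {t})"
    using indep_var_restrict[OF indep, of S "{t}"] S t by auto
  have meas: "(\<lambda>x. F (fst x, snd x t)) \<in> borel_measurable (PiM S (\<lambda>_. N) \<Otimes>\<^sub>M PiM {t} (\<lambda>_. N))"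
    by measurable
  have bound: "\<bar>F (fst x, snd x t)\<bar> \<le> C" if "x \<in> space (PiM S (\<lambda>_. N) \<Otimes>\<^sub>M PiM {t} (\<lambda>_. N))" for x
    using that by (intro bounded) (auto simp: space_pair_measure space_PiM)
  from integral_indep_var_eq_iterated[OF indep' meas bound] show ?thesis
    by simp
qed

lemma integral_indep_var_mult:
  fixes f g :: "'b \<Rightarrow> real"
  assumes indep: "indep_var N1 X N2 Y"
    and [measurable]: "f \<in> borel_measurable N1" "g \<in> borel_measurable N2"
    and "\<And>x. \<bar>f x\<bar> \<le> C1" and "\<And>y. \<bar>g y\<bar> \<le> C2"
  shows "(\<integral>\<omega>. f (X \<omega>) * g (Y \<omega>) \<partial>M) = (\<integral>\<omega>. f (X \<omega>) \<partial>M) * (\<integral>\<omega>. g (Y \<omega>) \<partial>M)"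
proof -
  have [measurable]: "X \<in> measurable M N1" "Y \<in> measurable M N2"
    using indep_var_rv1[OF indep] indep_var_rv2[OF indep] by auto
  have "indep_var borel (f \<circ> X) borel (g \<circ> Y)"
    by (rule indep_var_compose[OF indep]) simp_all
  moreover have "integrable M (f \<circ> X)" "integrable M (g \<circ> Y)"
    using assms(4,5) by (auto intro!: integrable_bounded)
  ultimately show ?thesis
    using indep_var_lebesgue_integral[of "f \<circ> X" "g \<circ> Y"] by (simp add: comp_def)
qed

lemma real_cond_exp_vimage_algebra_charact:
  fixes f :: "'a \<Rightarrow> real" and H :: "'b \<Rightarrow> real"
  assumes G [measurable]: "G \<in> measurable M K"
    and f [measurable]: "f \<in> borel_measurable M" and "\<And>\<omega>. \<omega> \<in> space M \<Longrightarrow> \<bar>f \<omega>\<bar> \<le> C"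
    and H [measurable]: "H \<in> borel_measurable K" and H_bounded: "\<And>x. x \<in> space K \<Longrightarrow> \<bar>H x\<bar> \<le> C'"
    and eq: "\<And>B. B \<in> sets K \<Longrightarrow>
      (\<integral>\<omega>. indicator B (G \<omega>) * f \<omega> \<partial>M) = (\<integral>\<omega>. indicator B (G \<omega>) * H (G \<omega>) \<partial>M)"
  shows "AE \<omega> in M. real_cond_exp M (vimage_algebra (space M) G K) f \<omega> = H (G \<omega>)"
proof -
  have G_space: "G \<in> space M \<rightarrow> space K"
    using measurable_space[OF G] by auto
  interpret finite_measure_subalgebra M "vimage_algebra (space M) G K"
    by unfold_locales (simp add: subalgebra_def sets_image_in_sets)
  show ?thesis
  proof (rule real_cond_exp_charact)
    fix A assume "A \<in> sets (vimage_algebra (space M) G K)"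
    then obtain B where B: "B \<in> sets K" and A: "A = G -` B \<inter> space M"
      using sets_vimage_algebra2[OF G_space] by auto
    have "(\<integral>x\<in>A. f x \<partial>M) = (\<integral>\<omega>. indicator B (G \<omega>) * f \<omega> \<partial>M)"
      unfolding set_lebesgue_integral_def A
      by (rule Bochner_Integration.integral_cong) (auto simp: indicator_def)
    also have "\<dots> = (\<integral>\<omega>. indicator B (G \<omega>) * H (G \<omega>) \<partial>M)"
      by (rule eq[OF B])
    also have "\<dots> = (\<integral>x\<in>A. H (G x) \<partial>M)"
      unfolding set_lebesgue_integral_def A
      by (rule Bochner_Integration.integral_cong) (auto simp: indicator_def)
    finally show "(\<integral>x\<in>A. f x \<partial>M) = (\<integral>x\<in>A. H (G x) \<partial>M)" .
  next
    show "integrable M f" "integrable M (\<lambda>x. H (G x))"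
      using assms(3) by (auto intro!: integrable_bounded H_bounded measurable_space[OF G])
    show "(\<lambda>x. H (G x)) \<in> borel_measurable (vimage_algebra (space M) G K)"
      using measurable_comp[OF measurable_vimage_algebra1[OF G_space] H] by (simp add: comp_def)
  qed
qed

end

section \<open>The direction kernel\<close>

lemma abs_sum_le_card_mult:
  fixes f :: "'i \<Rightarrow> real"
  assumes "\<And>i. i \<in> A \<Longrightarrow> \<bar>f i\<bar> \<le> c"
  shows "\<bar>\<Sum>i\<in>A. f i\<bar> \<le> real (card A) * c"
  using order.trans[OF sum_abs sum_bounded_above[of A "\<lambda>i. \<bar>f i\<bar>" c]] assms by simp

definition dir_kernel :: "nat \<Rightarrow> nat \<Rightarrow> (nat \<Rightarrow> real) \<times> (nat \<Rightarrow> real) \<Rightarrow> (nat \<Rightarrow> real) \<times> (nat \<Rightarrow> real) \<Rightarrow> real"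
  where "dir_kernel p q z w =
    euc_inner p (sphere_dir p (fst z)) (sphere_dir p (fst w)) * euc_inner q (sphere_dir q (snd z)) (sphere_dir q (snd w))"

lemma dir_kernel_measurable [measurable]:
  assumes [measurable]: "f \<in> measurable K (lebesgue_p p \<Otimes>\<^sub>M lebesgue_p q)" "g \<in> measurable K (lebesgue_p p \<Otimes>\<^sub>M lebesgue_p q)"
  shows "(\<lambda>x. dir_kernel p q (f x) (g x)) \<in> borel_measurable K"
  unfolding dir_kernel_def euc_inner_def by measurable

lemma dir_kernel_measurable' [measurable]:
  assumes [measurable]: "f \<in> measurable K (lebesgue_p p \<Otimes>\<^sub>M lebesgue_p q)"
  shows "(\<lambda>x. dir_kernel p q z (f x)) \<in> borel_measurable K"
  unfolding dir_kernel_def euc_inner_def by measurable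

lemma sum_dir_kernel_measurable [measurable]:
  assumes [measurable]: "f \<in> measurable K (PiM J (\<lambda>_. lebesgue_p p \<Otimes>\<^sub>M lebesgue_p q))"
    "g \<in> measurable K (lebesgue_p p \<Otimes>\<^sub>M lebesgue_p q)" and "A \<subseteq> J"
  shows "(\<lambda>x. \<Sum>i\<in>A. dir_kernel p q (f x i) (g x)) \<in> borel_measurable K"
proof (rule borel_measurable_sum)
  fix i assume "i \<in> A"
  then have [measurable]: "(\<lambda>x. f x i) \<in> measurable K (lebesgue_p p \<Otimes>\<^sub>M lebesgue_p q)"
    using measurable_comp[OF assms(1) measurable_component_singleton[of i J]] assms(3)
    by (auto simp: comp_def)
  show "(\<lambda>x. dir_kernel p q (f x i) (g x)) \<in> borel_measurable K" by measurable
qed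

lemma sum_dir_kernel_component_measurable [measurable]:
  assumes "j \<in> J" and "A \<subseteq> J"
  shows "(\<lambda>g. \<Sum>i\<in>A. dir_kernel p q (g i) (g j)) \<in> borel_measurable (PiM J (\<lambda>_. lebesgue_p p \<Otimes>\<^sub>M lebesgue_p q))"
  using sum_dir_kernel_measurable[OF measurable_ident_sets[OF refl] measurable_component_singleton[OF assms(1)] assms(2)] .

lemma sum_sum_dir_kernel_measurable [measurable]:
  "(\<lambda>g. \<Sum>i\<in>J. \<Sum>j\<in>J. dir_kernel p q (g i) (g j)) \<in> borel_measurable (PiM J (\<lambda>_. lebesgue_p p \<Otimes>\<^sub>M lebesgue_p q))"
  by (subst sum.swap) (intro borel_measurable_sum sum_dir_kernel_component_measurable; simp)

lemma abs_dir_kernel_le: "\<bar>dir_kernel p q z w\<bar> \<le> real p * real q"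
  unfolding dir_kernel_def abs_mult by (intro mult_mono abs_euc_inner_sphere_dir_le) auto

lemma dir_kernel_commute: "dir_kernel p q z w = dir_kernel p q w z"
  unfolding dir_kernel_def euc_inner_def by (simp add: mult.commute)

lemma dir_kernel_self:
  "euc_norm p (fst z) \<noteq> 0 \<Longrightarrow> euc_norm q (snd z) \<noteq> 0 \<Longrightarrow> dir_kernel p q z z = 1"
  by (simp add: dir_kernel_def euc_inner_def sum_sphere_dir_squared flip: power2_eq_square)

context prob_space
begin

lemma integral_dir_kernel:
  assumes X: "spherical_directions M p X" and Y: "spherical_directions M q Y"
    and XY: "indep_var (lebesgue_p p) X (lebesgue_p q) Y"
  shows "(\<integral>\<omega>. dir_kernel p q z (X \<omega>, Y \<omega>) \<partial>M) = 0"
  unfolding dir_kernel_def fst_conv snd_conv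
  by (subst integral_indep_var_mult[OF XY _ _ abs_euc_inner_sphere_dir_le abs_euc_inner_sphere_dir_le])
    (auto simp: euc_inner_def integral_euc_inner_sphere_dir[OF X, unfolded euc_inner_def])

lemma integral_dir_kernel_mult:
  assumes X: "spherical_directions M p X" and Y: "spherical_directions M q Y"
    and XY: "indep_var (lebesgue_p p) X (lebesgue_p q) Y"
  shows "(\<integral>\<omega>. dir_kernel p q z (X \<omega>, Y \<omega>) * dir_kernel p q z' (X \<omega>, Y \<omega>) \<partial>M)
    = dir_kernel p q z z' / (real p * real q)"
proof -
  define f where "f x = euc_inner p (sphere_dir p (fst z)) (sphere_dir p x) * euc_inner p (sphere_dir p (fst z')) (sphere_dir p x)" for x
  define g where "g y = euc_inner q (sphere_dir q (snd z)) (sphere_dir q y) * euc_inner q (sphere_dir q (snd z')) (sphere_dir q y)" for y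
  have [measurable]: "f \<in> borel_measurable (lebesgue_p p)" "g \<in> borel_measurable (lebesgue_p q)"
    unfolding f_def g_def euc_inner_def by measurable
  have "\<bar>f x\<bar> \<le> real p * real p" "\<bar>g y\<bar> \<le> real q * real q" for x y
    unfolding f_def g_def abs_mult by (intro mult_mono abs_euc_inner_sphere_dir_le; simp)+
  then have "(\<integral>\<omega>. f (X \<omega>) * g (Y \<omega>) \<partial>M) = (\<integral>\<omega>. f (X \<omega>) \<partial>M) * (\<integral>\<omega>. g (Y \<omega>) \<partial>M)"
    by (intro integral_indep_var_mult[OF XY]) auto
  then show ?thesis
    by (simp add: f_def g_def dir_kernel_def integral_euc_inner_sphere_dir_mult[OF X]
        integral_euc_inner_sphere_dir_mult[OF Y] algebra_simps)
qed

lemma integral_sum_dir_kernel: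
  assumes X: "spherical_directions M p X" and Y: "spherical_directions M q Y"
    and XY: "indep_var (lebesgue_p p) X (lebesgue_p q) Y" and J: "finite J"
  shows "(\<integral>\<omega>. (\<Sum>i\<in>J. dir_kernel p q (g i) (X \<omega>, Y \<omega>)) \<partial>M) = 0"
proof -
  have [measurable]: "X \<in> measurable M (lebesgue_p p)" "Y \<in> measurable M (lebesgue_p q)"
    using X Y by (simp_all add: spherical_directions_def)
  show ?thesis
    using J by (subst integral_sum_bounded[where C="real p * real q"])
      (auto simp: abs_dir_kernel_le integral_dir_kernel[OF X Y XY])
qed

lemma integral_sum_dir_kernel_squared:
  assumes X: "spherical_directions M p X" and Y: "spherical_directions M q Y"
    and XY: "indep_var (lebesgue_p p) X (lebesgue_p q) Y" and J: "finite J"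
  shows "(\<integral>\<omega>. (\<Sum>i\<in>J. dir_kernel p q (g i) (X \<omega>, Y \<omega>))\<^sup>2 \<partial>M)
    = (\<Sum>i\<in>J. \<Sum>j\<in>J. dir_kernel p q (g i) (g j)) / (real p * real q)"
proof -
  have [measurable]: "X \<in> measurable M (lebesgue_p p)" "Y \<in> measurable M (lebesgue_p q)"
    using X Y by (simp_all add: spherical_directions_def)
  define B where "B = (real p * real q) * (real p * real q)"
  have bound: "\<bar>dir_kernel p q (g i) w * dir_kernel p q (g j) w\<bar> \<le> B" for i j w
    unfolding B_def abs_mult by (intro mult_mono abs_dir_kernel_le) auto
  have "(\<integral>\<omega>. (\<Sum>i\<in>J. dir_kernel p q (g i) (X \<omega>, Y \<omega>))\<^sup>2 \<partial>M)
      = (\<integral>\<omega>. (\<Sum>i\<in>J. \<Sum>j\<in>J. dir_kernel p q (g i) (X \<omega>, Y \<omega>) * dir_kernel p q (g j) (X \<omega>, Y \<omega>)) \<partial>M)"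
    by (simp add: power2_eq_square sum_product)
  also have "\<dots> = (\<Sum>i\<in>J. \<integral>\<omega>. (\<Sum>j\<in>J. dir_kernel p q (g i) (X \<omega>, Y \<omega>) * dir_kernel p q (g j) (X \<omega>, Y \<omega>)) \<partial>M)"
    using J bound by (intro integral_sum_bounded[where C="real (card J) * B"] abs_sum_le_card_mult) auto
  also have "\<dots> = (\<Sum>i\<in>J. \<Sum>j\<in>J. \<integral>\<omega>. dir_kernel p q (g i) (X \<omega>, Y \<omega>) * dir_kernel p q (g j) (X \<omega>, Y \<omega>) \<partial>M)"
    using J bound by (intro sum.cong refl integral_sum_bounded[where C=B]) auto
  finally show ?thesis
    by (simp add: integral_dir_kernel_mult[OF X Y XY] sum_divide_distrib)
qed

lemma integral_sum_squared_orthogonal: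
  fixes f :: "'i \<Rightarrow> 'a \<Rightarrow> real"
  assumes J: "finite J" and [measurable]: "\<And>j. j \<in> J \<Longrightarrow> f j \<in> borel_measurable M"
    and bound: "\<And>j \<omega>. j \<in> J \<Longrightarrow> \<omega> \<in> space M \<Longrightarrow> \<bar>f j \<omega>\<bar> \<le> C"
    and orth: "\<And>j k. j \<in> J \<Longrightarrow> k \<in> J \<Longrightarrow> j \<noteq> k \<Longrightarrow> (\<integral>\<omega>. f j \<omega> * f k \<omega> \<partial>M) = 0"
  shows "(\<integral>\<omega>. (\<Sum>j\<in>J. f j \<omega>)\<^sup>2 \<partial>M) = (\<Sum>j\<in>J. \<integral>\<omega>. (f j \<omega>)\<^sup>2 \<partial>M)"
proof -
  have product_bound: "\<bar>f j \<omega> * f k \<omega>\<bar> \<le> C * C" if "j \<in> J" "k \<in> J" "\<omega> \<in> space M" for j k \<omega>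
    unfolding abs_mult using bound[OF that(1,3)] bound[OF that(2,3)]
    by (intro mult_mono) auto
  have "(\<integral>\<omega>. (\<Sum>j\<in>J. f j \<omega>)\<^sup>2 \<partial>M) = (\<integral>\<omega>. (\<Sum>j\<in>J. \<Sum>k\<in>J. f j \<omega> * f k \<omega>) \<partial>M)"
    by (simp add: power2_eq_square sum_product)
  also have "\<dots> = (\<Sum>j\<in>J. \<integral>\<omega>. (\<Sum>k\<in>J. f j \<omega> * f k \<omega>) \<partial>M)"
    using J product_bound by (intro integral_sum_bounded[where C="real (card J) * (C * C)"] abs_sum_le_card_mult) auto
  also have "\<dots> = (\<Sum>j\<in>J. \<Sum>k\<in>J. \<integral>\<omega>. f j \<omega> * f k \<omega> \<partial>M)"
    using J product_bound by (intro sum.cong refl integral_sum_bounded[where C="C * C"]) auto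
  also have "\<dots> = (\<Sum>j\<in>J. \<integral>\<omega>. f j \<omega> * f j \<omega> \<partial>M)"
  proof (rule sum.cong[OF refl])
    fix j assume j: "j \<in> J"
    have "(\<Sum>k\<in>J - {j}. \<integral>\<omega>. f j \<omega> * f k \<omega> \<partial>M) = 0"
      using j orth by (intro sum.neutral) auto
    then show "(\<Sum>k\<in>J. \<integral>\<omega>. f j \<omega> * f k \<omega> \<partial>M) = (\<integral>\<omega>. f j \<omega> * f j \<omega> \<partial>M)"
      using J j by (simp add: sum.remove)
  qed
  finally show ?thesis
    by (simp add: power2_eq_square)
qed

end

lemma sum_square_symmetric:
  fixes s :: "nat \<Rightarrow> nat \<Rightarrow> real"
  assumes sym: "\<And>i j. s i j = s j i" and diag: "\<And>i. i \<in> {1..<m} \<Longrightarrow> s i i = 1"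
  shows "(\<Sum>i\<in>{1..<m}. \<Sum>j\<in>{1..<m}. s i j) = real (m - 1) + 2 * (\<Sum>j\<in>{1..<m}. \<Sum>i\<in>{1..<j}. s i j)"
  using diag
proof (induction m)
  case (Suc m)
  show ?case
  proof (cases "m = 0")
    case False
    have insert: "{1..<Suc m} = insert m {1..<m}" using False by auto
    have "(\<Sum>j\<in>{1..<m}. s m j) = (\<Sum>i\<in>{1..<m}. s i m)"
      using sym by simp
    moreover have "s m m = 1"
      using Suc.prems False by auto
    ultimately show ?thesis
      using Suc by (simp add: insert sum.distrib of_nat_diff)
  qed simp
qed simp

lemma sum_sum_less_eq_weighted_sum:
  fixes f :: "nat \<Rightarrow> real"
  shows "(\<Sum>l\<in>{1..n}. \<Sum>j\<in>{1..<l}. f j) = (\<Sum>j\<in>{1..n}. real (n - j) * f j)"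
proof (induction n)
  case (Suc n)
  have "(\<Sum>l\<in>{1..Suc n}. \<Sum>j\<in>{1..<l}. f j) = (\<Sum>l\<in>{1..n}. \<Sum>j\<in>{1..<l}. f j) + (\<Sum>j\<in>{1..n}. f j)"
    by (simp add: atLeastLessThanSuc_atLeastAtMost)
  also have "\<dots> = (\<Sum>j\<in>{1..n}. real (Suc n - j) * f j)"
    unfolding Suc.IH sum.distrib[symmetric]
    by (intro sum.cong refl) (auto simp: Suc_diff_le of_nat_Suc algebra_simps)
  also have "\<dots> = (\<Sum>j\<in>{1..Suc n}. real (Suc n - j) * f j)"
    by simp
  finally show ?case .
qed simp

lemma sum_pred_atLeastAtMost: "(\<Sum>l\<in>{1..n}. real (l - 1)) = real n * (real n - 1) / 2"
  by (induction n) (simp_all add: field_simps)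

section \<open>A sample of fixed size\<close>

locale spherical_sample = prob_space M for M :: "'a measure" +
  fixes p q n :: nat and X Y :: "nat \<Rightarrow> 'a \<Rightarrow> nat \<Rightarrow> real"
  assumes p_pos: "0 < p" and q_pos: "0 < q"
    and indep_obs: "indep_vars (\<lambda>_. lebesgue_p p \<Otimes>\<^sub>M lebesgue_p q) (\<lambda>i \<omega>. (X i \<omega>, Y i \<omega>)) {1..n}"
    and indep_XY: "\<And>i. i \<in> {1..n} \<Longrightarrow> indep_var (lebesgue_p p) (X i) (lebesgue_p q) (Y i)"
    and spherical_X: "\<And>i. i \<in> {1..n} \<Longrightarrow> spherical_directions M p (X i)"
    and spherical_Y: "\<And>i. i \<in> {1..n} \<Longrightarrow> spherical_directions M q (Y i)"
begin

abbreviation obs_space where "obs_space \<equiv> lebesgue_p p \<Otimes>\<^sub>M lebesgue_p q"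

definition obs :: "nat \<Rightarrow> 'a \<Rightarrow> (nat \<Rightarrow> real) \<times> (nat \<Rightarrow> real)"
  where "obs i \<omega> = (X i \<omega>, Y i \<omega>)"

definition history :: "nat set \<Rightarrow> 'a \<Rightarrow> nat \<Rightarrow> (nat \<Rightarrow> real) \<times> (nat \<Rightarrow> real)"
  where "history J \<omega> = (\<lambda>i\<in>J. obs i \<omega>)"

lemma indep_vars_obs: "indep_vars (\<lambda>_. obs_space) obs {1..n}"
  using indep_obs unfolding obs_def[abs_def] .

lemma obs_measurable [measurable]: "i \<in> {1..n} \<Longrightarrow> obs i \<in> measurable M obs_space"
  using indep_vars_obs by (simp add: indep_vars_def)

lemma history_measurable [measurable]:
  "J \<subseteq> {1..n} \<Longrightarrow> history J \<in> measurable M (PiM J (\<lambda>_. obs_space))"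
  unfolding history_def by (rule measurable_restrict) auto

lemma integral_history_mult_sum_kernel:
  assumes l: "l \<in> {1..n}" and J: "J \<subseteq> {1..n}" "l \<notin> J"
    and [measurable]: "\<phi> \<in> borel_measurable (PiM J (\<lambda>_. obs_space))" and \<phi>_bound: "\<And>g. \<bar>\<phi> g\<bar> \<le> C"
  shows "(\<integral>\<omega>. \<phi> (history J \<omega>) * (\<Sum>i\<in>J. dir_kernel p q (obs i \<omega>) (obs l \<omega>)) \<partial>M) = 0"
proof -
  define F where "F x = \<phi> (fst x) * (\<Sum>i\<in>J. dir_kernel p q (fst x i) (snd x))"
    for x :: "(nat \<Rightarrow> (nat \<Rightarrow> real) \<times> (nat \<Rightarrow> real)) \<times> (nat \<Rightarrow> real) \<times> (nat \<Rightarrow> real)"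
  have [measurable]: "F \<in> borel_measurable (PiM J (\<lambda>_. obs_space) \<Otimes>\<^sub>M obs_space)"
    unfolding F_def by measurable
  have "\<bar>F x\<bar> \<le> C * (real (card J) * (real p * real q))" for x
    unfolding F_def abs_mult
    by (intro mult_mono \<phi>_bound abs_sum_le_card_mult abs_dir_kernel_le) (auto intro: order.trans[OF abs_ge_zero \<phi>_bound])
  then have "(\<integral>\<omega>. F (history J \<omega>, obs l \<omega>) \<partial>M) = (\<integral>\<omega>. (\<integral>\<omega>'. F (history J \<omega>, obs l \<omega>') \<partial>M) \<partial>M)"
    unfolding history_def using l J by (intro integral_indep_vars_eq_iterated[OF indep_vars_obs]) auto
  also have "\<dots> = 0"
    using J finite_subset[OF J(1)]
    by (simp add: F_def obs_def integral_sum_dir_kernel[OF spherical_X[OF l] spherical_Y[OF l] indep_XY[OF l]])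
  finally show ?thesis
    using J by (simp add: F_def history_def)
qed

lemma integral_history_mult_sum_kernel_squared:
  assumes l: "l \<in> {1..n}" and J: "J \<subseteq> {1..n}" "l \<notin> J"
    and [measurable]: "\<phi> \<in> borel_measurable (PiM J (\<lambda>_. obs_space))" and \<phi>_bound: "\<And>g. \<bar>\<phi> g\<bar> \<le> C"
  shows "(\<integral>\<omega>. \<phi> (history J \<omega>) * (\<Sum>i\<in>J. dir_kernel p q (obs i \<omega>) (obs l \<omega>))\<^sup>2 \<partial>M)
    = (\<integral>\<omega>. \<phi> (history J \<omega>) * (\<Sum>i\<in>J. \<Sum>j\<in>J. dir_kernel p q (obs i \<omega>) (obs j \<omega>)) / (real p * real q) \<partial>M)"
proof -
  define F where "F x = \<phi> (fst x) * (\<Sum>i\<in>J. dir_kernel p q (fst x i) (snd x))\<^sup>2"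
    for x :: "(nat \<Rightarrow> (nat \<Rightarrow> real) \<times> (nat \<Rightarrow> real)) \<times> (nat \<Rightarrow> real) \<times> (nat \<Rightarrow> real)"
  have [measurable]: "F \<in> borel_measurable (PiM J (\<lambda>_. obs_space) \<Otimes>\<^sub>M obs_space)"
    unfolding F_def by measurable
  have "\<bar>\<Sum>i\<in>J. dir_kernel p q (g i) w\<bar>\<^sup>2 \<le> (real (card J) * (real p * real q))\<^sup>2" for g w
    by (intro power_mono abs_sum_le_card_mult abs_dir_kernel_le) auto
  then have "\<bar>F x\<bar> \<le> C * (real (card J) * (real p * real q))\<^sup>2" for x
    unfolding F_def abs_mult
    by (intro mult_mono \<phi>_bound) (auto intro: order.trans[OF abs_ge_zero \<phi>_bound])
  then have "(\<integral>\<omega>. F (history J \<omega>, obs l \<omega>) \<partial>M) = (\<integral>\<omega>. (\<integral>\<omega>'. F (history J \<omega>, obs l \<omega>') \<partial>M) \<partial>M)"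
    unfolding history_def using l J by (intro integral_indep_vars_eq_iterated[OF indep_vars_obs]) auto
  also have "\<dots> = (\<integral>\<omega>. \<phi> (history J \<omega>) * (\<Sum>i\<in>J. \<Sum>j\<in>J. dir_kernel p q (obs i \<omega>) (obs j \<omega>)) / (real p * real q) \<partial>M)"
    using J finite_subset[OF J(1)]
    by (simp add: F_def obs_def history_def
        integral_sum_dir_kernel_squared[OF spherical_X[OF l] spherical_Y[OF l] indep_XY[OF l]])
  finally show ?thesis
    using J by (simp add: F_def history_def)
qed

lemma AE_dir_kernel_obs_self: "AE \<omega> in M. \<forall>i\<in>{1..n}. dir_kernel p q (obs i \<omega>) (obs i \<omega>) = 1"
proof (rule AE_finite_allI)
  fix i assume i: "i \<in> {1..n}"
  from AE_spherical_directions_nonzero[OF spherical_X[OF i]] AE_spherical_directions_nonzero[OF spherical_Y[OF i]]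
  show "AE \<omega> in M. dir_kernel p q (obs i \<omega>) (obs i \<omega>) = 1"
    by eventually_elim (simp add: dir_kernel_self obs_def)
qed simp

lemma integral_dir_kernel_obs:
  assumes i: "i \<in> {1..n}" and j: "j \<in> {1..n}"
  shows "(\<integral>\<omega>. dir_kernel p q (obs i \<omega>) (obs j \<omega>) \<partial>M) = (if i = j then 1 else 0)"
proof (cases "i = j")
  case True
  have "(\<integral>\<omega>. dir_kernel p q (obs i \<omega>) (obs i \<omega>) \<partial>M) = (\<integral>\<omega>. 1 \<partial>M)"
    using AE_dir_kernel_obs_self i by (intro integral_cong_AE) (auto elim!: eventually_mono)
  then show ?thesis using True by (simp add: prob_space)
next
  case False
  have "(\<integral>\<omega>. (\<lambda>_. 1) (history {i} \<omega>) * (\<Sum>i'\<in>{i}. dir_kernel p q (obs i' \<omega>) (obs j \<omega>)) \<partial>M) = 0"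
    using i j False by (intro integral_history_mult_sum_kernel[where C=1]) auto
  then show ?thesis using False by simp
qed

definition lower_sum :: "nat \<Rightarrow> 'a \<Rightarrow> real"
  where "lower_sum j \<omega> = (\<Sum>i\<in>{1..<j}. dir_kernel p q (obs i \<omega>) (obs j \<omega>))"

lemma lower_sum_measurable [measurable]: "j \<in> {1..n} \<Longrightarrow> lower_sum j \<in> borel_measurable M"
  unfolding lower_sum_def by (intro borel_measurable_sum) auto

lemma abs_lower_sum_le: "j \<le> n \<Longrightarrow> \<bar>lower_sum j \<omega>\<bar> \<le> real n * (real p * real q)"
  unfolding lower_sum_def
  by (rule order.trans[OF abs_sum_le_card_mult[OF abs_dir_kernel_le]]) (auto intro: mult_right_mono)

lemma integral_lower_sum_mult:
  assumes j: "j \<in> {1..n}" and k: "k \<in> {1..n}" and jk: "j < k"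
  shows "(\<integral>\<omega>. lower_sum j \<omega> * lower_sum k \<omega> \<partial>M) = 0"
proof -
  define \<phi> where "\<phi> g = (\<Sum>i\<in>{1..<j}. dir_kernel p q (g i) (g j))"
    for g :: "nat \<Rightarrow> (nat \<Rightarrow> real) \<times> (nat \<Rightarrow> real)"
  have \<phi>_measurable: "\<phi> \<in> borel_measurable (PiM {1..<k} (\<lambda>_. obs_space))"
    unfolding \<phi>_def using j jk by (intro sum_dir_kernel_component_measurable) auto
  have "\<bar>\<phi> g\<bar> \<le> real n * (real p * real q)" for g
    unfolding \<phi>_def using j
    by (intro order.trans[OF abs_sum_le_card_mult[OF abs_dir_kernel_le]]) (auto intro: mult_right_mono)
  then have "(\<integral>\<omega>. \<phi> (history {1..<k} \<omega>) * (\<Sum>i\<in>{1..<k}. dir_kernel p q (obs i \<omega>) (obs k \<omega>)) \<partial>M) = 0"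
    using k by (intro integral_history_mult_sum_kernel[OF k _ _ \<phi>_measurable]) auto
  then show ?thesis
    using j jk by (simp add: \<phi>_def history_def lower_sum_def)
qed

lemma integral_lower_sum_squared:
  assumes j: "j \<in> {1..n}"
  shows "(\<integral>\<omega>. (lower_sum j \<omega>)\<^sup>2 \<partial>M) = real (j - 1) / (real p * real q)"
proof -
  have "(\<integral>\<omega>. (lower_sum j \<omega>)\<^sup>2 \<partial>M)
      = (\<integral>\<omega>. (\<Sum>i\<in>{1..<j}. \<Sum>i'\<in>{1..<j}. dir_kernel p q (obs i \<omega>) (obs i' \<omega>)) / (real p * real q) \<partial>M)"
    using integral_history_mult_sum_kernel_squared[OF j _ _ borel_measurable_const, of "{1..<j}" 1 1] j
    by (simp add: lower_sum_def subset_eq)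
  also have "\<dots> = (\<Sum>i\<in>{1..<j}. \<Sum>i'\<in>{1..<j}. \<integral>\<omega>. dir_kernel p q (obs i \<omega>) (obs i' \<omega>) \<partial>M) / (real p * real q)"
  proof -
    have "(\<integral>\<omega>. (\<Sum>i\<in>{1..<j}. \<Sum>i'\<in>{1..<j}. dir_kernel p q (obs i \<omega>) (obs i' \<omega>)) \<partial>M)
        = (\<Sum>i\<in>{1..<j}. \<integral>\<omega>. (\<Sum>i'\<in>{1..<j}. dir_kernel p q (obs i \<omega>) (obs i' \<omega>)) \<partial>M)"
      using j by (intro integral_sum_bounded[where C="real (card {1..<j}) * (real p * real q)"] abs_sum_le_card_mult
          abs_dir_kernel_le borel_measurable_sum) auto
    also have "\<dots> = (\<Sum>i\<in>{1..<j}. \<Sum>i'\<in>{1..<j}. \<integral>\<omega>. dir_kernel p q (obs i \<omega>) (obs i' \<omega>) \<partial>M)"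
      using j by (intro sum.cong refl integral_sum_bounded[where C="real p * real q"] abs_dir_kernel_le) auto
    finally show ?thesis by simp
  qed
  finally show ?thesis
    using j by (simp add: integral_dir_kernel_obs)
qed

definition weighted_lower_sum :: "'a \<Rightarrow> real"
  where "weighted_lower_sum \<omega> = (\<Sum>j\<in>{1..n}. real (n - j) * lower_sum j \<omega>)"

lemma abs_weighted_term_le:
  "j \<in> {1..n} \<Longrightarrow> \<bar>real (n - j) * lower_sum j \<omega>\<bar> \<le> real n * (real n * (real p * real q))"
  unfolding abs_mult by (intro mult_mono abs_lower_sum_le) auto

lemma integral_weighted_lower_sum_squared_le:
  "(\<integral>\<omega>. (weighted_lower_sum \<omega>)\<^sup>2 \<partial>M) \<le> real n ^ 4 / (real p * real q)"
proof -
  have orth: "(\<integral>\<omega>. real (n - j) * lower_sum j \<omega> * (real (n - k) * lower_sum k \<omega>) \<partial>M) = 0"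
    if "j \<in> {1..n}" "k \<in> {1..n}" "j \<noteq> k" for j k
    using that integral_lower_sum_mult[of j k] integral_lower_sum_mult[of k j]
    by (cases "j < k") (auto simp: ac_simps)
  have "(\<integral>\<omega>. (weighted_lower_sum \<omega>)\<^sup>2 \<partial>M) = (\<Sum>j\<in>{1..n}. \<integral>\<omega>. (real (n - j) * lower_sum j \<omega>)\<^sup>2 \<partial>M)"
    unfolding weighted_lower_sum_def using orth abs_weighted_term_le
    by (intro integral_sum_squared_orthogonal) auto
  also have "\<dots> = (\<Sum>j\<in>{1..n}. real (n - j) ^ 2 * (real (j - 1) / (real p * real q)))"
    by (intro sum.cong refl) (simp add: power_mult_distrib integral_lower_sum_squared)
  also have "\<dots> \<le> (\<Sum>j\<in>{1..n}. real n ^ 2 * (real n / (real p * real q)))"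
    using p_pos q_pos by (intro sum_mono mult_mono power_mono divide_right_mono) auto
  also have "\<dots> = real n ^ 4 / (real p * real q)"
    by (simp add: power_numeral_reduce)
  finally show ?thesis .
qed

lemma DI_eq_lower_sum: "DI n p q X Y l \<omega> = sqrt (2 * real p * real q) / real n * lower_sum l \<omega>"
  by (simp add: DI_def lower_sum_def dir_kernel_def obs_def)

lemma abs_DI_le:
  "l \<in> {1..n} \<Longrightarrow> \<bar>DI n p q X Y l \<omega>\<bar> \<le> sqrt (2 * real p * real q) / real n * (real n * (real p * real q))"
  unfolding DI_eq_lower_sum abs_mult by (intro mult_mono abs_lower_sum_le) auto

lemma past_algebra_eq_vimage_history:
  assumes "1 \<le> l"
  shows "past_algebra M p q X Y (l - 1) = vimage_algebra (space M) (history {1..<l}) (PiM {1..<l} (\<lambda>_. obs_space))"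
proof -
  have "{1..l - 1} = {1..<l}" using assms by auto
  then show ?thesis by (simp add: past_algebra_def history_def[abs_def] obs_def)
qed

lemma AE_cond_exp_DI_squared:
  assumes l: "l \<in> {1..n}"
  shows "AE \<omega> in M. real_cond_exp M (past_algebra M p q X Y (l - 1)) (\<lambda>\<omega>'. (DI n p q X Y l \<omega>')\<^sup>2) \<omega>
    = 2 / (real n)\<^sup>2 * (\<Sum>i\<in>{1..<l}. \<Sum>j\<in>{1..<l}. dir_kernel p q (obs i \<omega>) (obs j \<omega>))"
proof -
  define J where "J = {1..<l}"
  define H where "H g = 2 / (real n)\<^sup>2 * (\<Sum>i\<in>J. \<Sum>j\<in>J. dir_kernel p q (g i) (g j))"
    for g :: "nat \<Rightarrow> (nat \<Rightarrow> real) \<times> (nat \<Rightarrow> real)"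
  have J: "J \<subseteq> {1..n}" "l \<notin> J" "card J \<le> n"
    using l by (auto simp: J_def)
  have c: "(sqrt (2 * real p * real q) / real n)\<^sup>2 = 2 * real p * real q / (real n)\<^sup>2"
    by (simp add: power_divide)
  have H_measurable: "H \<in> borel_measurable (PiM J (\<lambda>_. obs_space))"
    unfolding H_def by measurable
  have H_bound: "\<bar>H g\<bar> \<le> 2 / (real n)\<^sup>2 * (real (card J) * (real (card J) * (real p * real q)))" for g
    unfolding H_def abs_mult
    by (intro mult_mono abs_sum_le_card_mult abs_dir_kernel_le) auto
  have DI_bound: "\<bar>(DI n p q X Y l \<omega>)\<^sup>2\<bar> \<le> (sqrt (2 * real p * real q) / real n * (real n * (real p * real q)))\<^sup>2" for \<omega>
    using power_mono[OF abs_DI_le[OF l] abs_ge_zero, where n=2] by simp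
  have "AE \<omega> in M. real_cond_exp M (vimage_algebra (space M) (history J) (PiM J (\<lambda>_. obs_space)))
      (\<lambda>\<omega>'. (DI n p q X Y l \<omega>')\<^sup>2) \<omega> = H (history J \<omega>)"
  proof (rule real_cond_exp_vimage_algebra_charact[OF history_measurable[OF J(1)] _ DI_bound H_measurable H_bound])
    show "(\<lambda>\<omega>. (DI n p q X Y l \<omega>)\<^sup>2) \<in> borel_measurable M"
      using l by (simp add: DI_eq_lower_sum)
    fix B assume B: "B \<in> sets (PiM J (\<lambda>_. obs_space))"
    have "(\<integral>\<omega>. indicator B (history J \<omega>) * (lower_sum l \<omega>)\<^sup>2 \<partial>M)
        = (\<integral>\<omega>. indicator B (history J \<omega>) * (\<Sum>i\<in>J. \<Sum>j\<in>J. dir_kernel p q (obs i \<omega>) (obs j \<omega>)) / (real p * real q) \<partial>M)"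
      using integral_history_mult_sum_kernel_squared[OF l J(1,2) borel_measurable_indicator[OF B], of 1]
      by (simp add: lower_sum_def J_def)
    then show "(\<integral>\<omega>. indicator B (history J \<omega>) * (DI n p q X Y l \<omega>)\<^sup>2 \<partial>M)
        = (\<integral>\<omega>. indicator B (history J \<omega>) * H (history J \<omega>) \<partial>M)"
      using p_pos q_pos
      by (simp add: DI_eq_lower_sum power_mult_distrib c H_def history_def field_simps)
  qed
  moreover have "1 \<le> l" using l by simp
  ultimately show ?thesis
    unfolding past_algebra_eq_vimage_history[OF \<open>1 \<le> l\<close>] J_def[symmetric] using J(1)
    by (simp add: H_def history_def)
qed

lemma weighted_lower_sum_measurable [measurable]: "weighted_lower_sum \<in> borel_measurable M"
  unfolding weighted_lower_sum_def[abs_def] by (intro borel_measurable_sum borel_measurable_times) auto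

lemma AE_sum_cond_exp_DI_squared:
  assumes n: "1 \<le> n"
  shows "AE \<omega> in M. (\<Sum>l\<in>{1..n}. real_cond_exp M (past_algebra M p q X Y (l - 1)) (\<lambda>\<omega>'. (DI n p q X Y l \<omega>')\<^sup>2) \<omega>) - 1
    = - 1 / real n + 4 / (real n)\<^sup>2 * weighted_lower_sum \<omega>"
proof -
  have "AE \<omega> in M. \<forall>l\<in>{1..n}. real_cond_exp M (past_algebra M p q X Y (l - 1)) (\<lambda>\<omega>'. (DI n p q X Y l \<omega>')\<^sup>2) \<omega>
      = 2 / (real n)\<^sup>2 * (\<Sum>i\<in>{1..<l}. \<Sum>j\<in>{1..<l}. dir_kernel p q (obs i \<omega>) (obs j \<omega>))"
    by (intro AE_finite_allI AE_cond_exp_DI_squared) auto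
  with AE_dir_kernel_obs_self show ?thesis
  proof eventually_elim
    case (elim \<omega>)
    have "(\<Sum>i\<in>{1..<l}. \<Sum>j\<in>{1..<l}. dir_kernel p q (obs i \<omega>) (obs j \<omega>))
        = real (l - 1) + 2 * (\<Sum>j\<in>{1..<l}. lower_sum j \<omega>)" if "l \<in> {1..n}" for l
      unfolding lower_sum_def using that elim(1)
      by (intro sum_square_symmetric dir_kernel_commute) auto
    with elim(2) have "(\<Sum>l\<in>{1..n}. real_cond_exp M (past_algebra M p q X Y (l - 1)) (\<lambda>\<omega>'. (DI n p q X Y l \<omega>')\<^sup>2) \<omega>)
        = (\<Sum>l\<in>{1..n}. 2 / (real n)\<^sup>2 * (real (l - 1) + 2 * (\<Sum>j\<in>{1..<l}. lower_sum j \<omega>)))"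
      by (intro sum.cong) auto
    also have "\<dots> = 2 / (real n)\<^sup>2 * ((\<Sum>l\<in>{1..n}. real (l - 1)) + 2 * (\<Sum>l\<in>{1..n}. \<Sum>j\<in>{1..<l}. lower_sum j \<omega>))"
      by (simp only: distrib_left sum.distrib sum_distrib_left)
    also have "\<dots> = 2 / (real n)\<^sup>2 * (real n * (real n - 1) / 2 + 2 * weighted_lower_sum \<omega>)"
      unfolding sum_pred_atLeastAtMost sum_sum_less_eq_weighted_sum weighted_lower_sum_def ..
    finally show ?case
      using n by (simp add: field_simps power2_eq_square)
  qed
qed

lemma integral_sum_cond_exp_DI_squared_minus_1_le:
  assumes n: "1 \<le> n"
  shows "(\<integral>\<omega>. ((\<Sum>l\<in>{1..n}. real_cond_exp M (past_algebra M p q X Y (l - 1)) (\<lambda>\<omega>'. (DI n p q X Y l \<omega>')\<^sup>2) \<omega>) - 1)\<^sup>2 \<partial>M)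
    \<le> 2 / (real n)\<^sup>2 + 32 / (real p * real q)"
proof -
  define c where "c = 4 / (real n)\<^sup>2"
  define B where "B \<omega> = 2 / (real n)\<^sup>2 + 2 * c\<^sup>2 * (weighted_lower_sum \<omega>)\<^sup>2" for \<omega>
  have "\<bar>weighted_lower_sum \<omega>\<bar> \<le> real (card {1..n}) * (real n * (real n * (real p * real q)))" for \<omega>
    unfolding weighted_lower_sum_def by (intro abs_sum_le_card_mult abs_weighted_term_le)
  then have "integrable M (\<lambda>\<omega>. (weighted_lower_sum \<omega>)\<^sup>2)"
    by (intro integrable_bounded[where C="(real n * (real n * (real n * (real p * real q))))\<^sup>2"])
      (auto simp: abs_le_square_iff[symmetric])
  then have "(\<integral>\<omega>. ((\<Sum>l\<in>{1..n}. real_cond_exp M (past_algebra M p q X Y (l - 1)) (\<lambda>\<omega>'. (DI n p q X Y l \<omega>')\<^sup>2) \<omega>) - 1)\<^sup>2 \<partial>M)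
      \<le> (\<integral>\<omega>. B \<omega> \<partial>M)"
  proof (intro integral_mono_AE')
    show "AE \<omega> in M. ((\<Sum>l\<in>{1..n}. real_cond_exp M (past_algebra M p q X Y (l - 1)) (\<lambda>\<omega>'. (DI n p q X Y l \<omega>')\<^sup>2) \<omega>) - 1)\<^sup>2 \<le> B \<omega>"
      using AE_sum_cond_exp_DI_squared[OF n]
    proof eventually_elim
      case (elim \<omega>)
      have "(a + b)\<^sup>2 \<le> 2 * a\<^sup>2 + 2 * b\<^sup>2" for a b :: real
        using sum_power2_ge_zero[of "a - b" 0] by (simp add: power2_eq_square algebra_simps)
      from this[of "- 1 / real n" "c * weighted_lower_sum \<omega>"] show ?case
        unfolding elim B_def c_def by (simp add: power_mult_distrib power_divide)
    qed
  qed (simp_all add: B_def)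
  also have "(\<integral>\<omega>. B \<omega> \<partial>M) = 2 / (real n)\<^sup>2 + 2 * c\<^sup>2 * (\<integral>\<omega>. (weighted_lower_sum \<omega>)\<^sup>2 \<partial>M)"
    unfolding B_def using \<open>integrable M _\<close> by (simp add: prob_space)
  also have "\<dots> \<le> 2 / (real n)\<^sup>2 + 2 * c\<^sup>2 * (real n ^ 4 / (real p * real q))"
    by (intro add_left_mono mult_left_mono integral_weighted_lower_sum_squared_le) auto
  also have "2 * c\<^sup>2 * (real n ^ 4 / (real p * real q)) = 32 / (real p * real q)"
    unfolding c_def using n by (simp add: field_simps power2_eq_square power4_eq_xxxx)
  finally show ?thesis .
qed

end

lemma tendsto_divide_mult_max_at_top:
  fixes p q :: "nat \<Rightarrow> nat"
  assumes pos: "\<And>n. 0 < p n \<and> 0 < q n"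
    and max: "filterlim (\<lambda>n. max (p n) (q n)) at_top sequentially"
  shows "(\<lambda>n. c / (real (p n) * real (q n))) \<longlonglongrightarrow> 0"
proof -
  have "max (p n) (q n) \<le> p n * q n" for n
    using pos[of n] by (auto simp: max_def)
  then have "filterlim (\<lambda>n. p n * q n) at_top sequentially"
    by (intro filterlim_at_top_mono[OF max] always_eventually) auto
  from filterlim_compose[OF filterlim_real_sequentially this]
  have "filterlim (\<lambda>n. real (p n) * real (q n)) at_top sequentially"
    by simp
  then show ?thesis
    by (intro tendsto_divide_0[OF tendsto_const] filterlim_at_top_imp_at_infinity)
qed

theorem lemma5:
  fixes p q :: "nat \<Rightarrow> nat"
    and M :: "nat \<Rightarrow> 'a measure"
    and X Y :: "nat \<Rightarrow> nat \<Rightarrow> 'a \<Rightarrow> (nat \<Rightarrow> real)"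
  assumes pos: "\<And>n. p n > 0 \<and> q n > 0"
    and maxlim: "filterlim (\<lambda>n. max (p n) (q n)) at_top sequentially"
    and prob: "\<And>n. prob_space (M n)"
    and meas: "\<And>n i. i \<in> {1..n} \<Longrightarrow>
         (\<lambda>\<omega>. (X n i \<omega>, Y n i \<omega>)) \<in> measurable (M n) (lebesgue_p (p n) \<Otimes>\<^sub>M lebesgue_p (q n))"
    and indep: "\<And>n. prob_space.indep_vars (M n) (\<lambda>_. lebesgue_p (p n) \<Otimes>\<^sub>M lebesgue_p (q n))
                        (\<lambda>i \<omega>. (X n i \<omega>, Y n i \<omega>)) {1..n}"
    and ident: "\<And>n i. i \<in> {1..n} \<Longrightarrow>
         distr (M n) (lebesgue_p (p n) \<Otimes>\<^sub>M lebesgue_p (q n)) (\<lambda>\<omega>. (X n i \<omega>, Y n i \<omega>))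
       = distr (M n) (lebesgue_p (p n) \<Otimes>\<^sub>M lebesgue_p (q n)) (\<lambda>\<omega>. (X n 1 \<omega>, Y n 1 \<omega>))"
    and XYindep: "\<And>n i. i \<in> {1..n} \<Longrightarrow>
         prob_space.indep_var (M n) (lebesgue_p (p n)) (X n i) (lebesgue_p (q n)) (Y n i)"
    and sphX: "\<And>n i. i \<in> {1..n} \<Longrightarrow> spherical_directions (M n) (p n) (X n i)"
    and sphY: "\<And>n i. i \<in> {1..n} \<Longrightarrow> spherical_directions (M n) (q n) (Y n i)"
  shows "(\<lambda>n. \<integral>\<omega>. ((\<Sum>l\<in>{1..n}.
              real_cond_exp (M n) (past_algebra (M n) (p n) (q n) (X n) (Y n) (l - 1))
                 (\<lambda>\<omega>'. (DI n (p n) (q n) (X n) (Y n) l \<omega>')\<^sup>2) \<omega>) - 1)\<^sup>2 \<partial>M n)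
         \<longlonglongrightarrow> 0"
proof -
  have sample: "spherical_sample (M n) (p n) (q n) n (X n) (Y n)" for n
    using prob pos indep XYindep sphX sphY by (simp add: spherical_sample_def spherical_sample_axioms_def)
  have "(\<lambda>n. 2 / (real n)\<^sup>2) \<longlonglongrightarrow> 0"
    by (intro tendsto_divide_0[OF tendsto_const] filterlim_at_top_imp_at_infinity
        filterlim_pow_at_top filterlim_real_sequentially) simp
  from tendsto_add[OF this tendsto_divide_mult_max_at_top[OF pos maxlim]]
  have bound_lim: "(\<lambda>n. 2 / (real n)\<^sup>2 + 32 / (real (p n) * real (q n))) \<longlonglongrightarrow> 0"
    by simp
  show ?thesis
    by (rule tendsto_sandwich[OF always_eventually eventually_sequentiallyI[of 1,
          OF spherical_sample.integral_sum_cond_exp_DI_squared_minus_1_le[OF sample]] tendsto_const bound_lim])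
      simp
qed

end
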